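(* $\bigcap \mathcal{L}(S_{r,N})=\{\{n\}: n\in\mathbb{N}\}$, where the intersection is taken over all nontrivial atomic exponential Puiseux semirings $S_{r,N}$ (i.e., over all numerical monoids $N$ and all $r\in\mathbb{Q}_{>0}\setminus\mathbb{N}$ with $\mathsf{n}(r)>1$).
   Context: $\mathbb{N}=\{0,1,2,\dots\}$. A numerical monoid $N$ is an additive submonoid of $\mathbb{N}$ with finite complement in $\mathbb{N}$. For $r\in\mathbb{Q}_{>0}$ write $r=\mathsf{n}(r)/\mathsf{d}(r)$ in lowest terms. The exponential Puiseux semiring $S_{r,N}$ is the additive submonoid of $\mathbb{Q}_{\ge0}$ generated by $\{r^k:k\in N\}$; it is called nontrivial if $r\notin\mathbb{N}$, and for $r\notin\mathbb{N}$ it is atomic iff $\mathsf{n}(r)>1$, with atoms $r^s$, $s\in N$. For an atomic monoid $M$, $\mathsf{L}(x)$ is the set of lengths of factorizations of $x$ into atoms ($\mathsf{L}(0)=\{0\}$), and $\mathcal{L}(M)=\{\mathsf{L}(x):x\in M\}$ is its system of sets of lengths. *)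

theory Defs
  imports Complex_Main "HOL-Library.Multiset"
begin

definition numerical_monoid :: "nat set \<Rightarrow> bool" where
  "numerical_monoid N \<longleftrightarrow> 0 \<in> N \<and> (\<forall>a\<in>N. \<forall>b\<in>N. a + b \<in> N) \<and> finite (UNIV - N)"

definition gen_monoid :: "rat set \<Rightarrow> rat set" where
  "gen_monoid G = {sum_mset F | F. set_mset F \<subseteq> G}"

definition exp_puiseux :: "rat \<Rightarrow> nat set \<Rightarrow> rat set" where
  "exp_puiseux r N = gen_monoid {r ^ k | k. k \<in> N}"

definition rat_num :: "rat \<Rightarrow> int" where
  "rat_num r = fst (quotient_of r)"

definition units_of_monoid :: "rat set \<Rightarrow> rat set" where
  "units_of_monoid M = {u \<in> M. \<exists>v\<in>M. u + v = 0}"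

definition atoms :: "rat set \<Rightarrow> rat set" where
  "atoms M = {a \<in> M. a \<notin> units_of_monoid M \<and>
      (\<forall>x\<in>M. \<forall>y\<in>M. a = x + y \<longrightarrow> x \<in> units_of_monoid M \<or> y \<in> units_of_monoid M)}"

definition lengths :: "rat set \<Rightarrow> rat \<Rightarrow> nat set" where
  "lengths M x = {size F | F. set_mset F \<subseteq> atoms M \<and> sum_mset F = x}"

definition system_of_lengths :: "rat set \<Rightarrow> nat set set" where
  "system_of_lengths M = {lengths M x | x. x \<in> M}"

end

theory Submission
  imports Defs "HOL-Number_Theory.Cong"
begin

(* Write r = a/b in lowest terms. Factorizations of an element of S_{r,N} are multisets E of
   exponents with a prescribed value of the sum of r^k over E. Clearing denominators shows that two
   such multisets with equal sums have numbers of zero exponents congruent modulo a; reflecting the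
   exponents about their maximum gives the same modulo b. Hence a sufficiently dominant largest
   exponent (if r > 1) or smallest exponent (if r < 1) occurs in every factorization, and adjoining
   such exponents one at a time produces, for every n, an element all of whose factorizations have
   length n. So every {n} lies in every system of sets of lengths.
   Conversely, for r = (2m+1)/(m+1) numerator and denominator agree modulo m, so all lengths of an
   element are congruent modulo m. A set of lengths shared by all these systems is nonempty and
   its elements are congruent modulo every m, so it is a singleton. *)

definition powsum :: "rat \<Rightarrow> nat multiset \<Rightarrow> rat" where
  "powsum r E = (\<Sum>k\<in>#E. r ^ k)"

lemma powsum_empty [simp]: "powsum r {#} = 0"
  by (simp add: powsum_def)

lemma powsum_add_mset [simp]: "powsum r (add_mset k E) = r ^ k + powsum r E"
  by (simp add: powsum_def)

lemma powsum_nonneg: "r > 0 \<Longrightarrow> powsum r E \<ge> 0"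
  by (induction E) auto

lemma powsum_pos: "r > 0 \<Longrightarrow> E \<noteq> {#} \<Longrightarrow> powsum r E > 0"
  by (induction E) (auto simp: add_pos_nonneg powsum_nonneg)

lemma power_le_powsum: "r > 0 \<Longrightarrow> k \<in># E \<Longrightarrow> r ^ k \<le> powsum r E"
  by (induction E) (auto simp: powsum_nonneg intro: add_increasing add_increasing2)

lemma powsum_le_size: "(\<And>k. k \<in># E \<Longrightarrow> r ^ k \<le> c) \<Longrightarrow> powsum r E \<le> of_nat (size E) * c"
  by (induction E) (auto simp: algebra_simps add_mono)

lemma powsum_eq_0_iff: "r > 0 \<Longrightarrow> powsum r E = 0 \<longleftrightarrow> E = {#}"
  using powsum_pos by fastforce

lemma powsum_shift:
  assumes "\<forall>k\<in>#E. M \<le> k"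
  shows "powsum r E = r ^ M * powsum r (image_mset (\<lambda>k. k - M) E)"
  using assms by (induction E) (auto simp: algebra_simps power_add [symmetric])

lemma powsum_reflect:
  assumes "r \<noteq> 0" and "\<forall>k\<in>#E. k \<le> M"
  shows "powsum r E = r ^ M * powsum (inverse r) (image_mset (\<lambda>k. M - k) E)"
  using assms
proof (induction E)
  case (add k E)
  then have "r ^ k = r ^ M * inverse r ^ (M - k)"
    by (simp add: power_diff power_inverse field_simps)
  with add show ?case by (simp add: algebra_simps)
qed simp

lemma powsum_clear_denominator:
  fixes p q :: int
  assumes q: "q \<noteq> 0" and "\<forall>k\<in>#E. k \<le> K"
  shows "of_int q ^ K * powsum (of_int p / of_int q) E = of_int (\<Sum>k\<in>#E. p ^ k * q ^ (K - k))"
  using assms(2)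
proof (induction E)
  case (add k E)
  then have "(of_int q :: rat) ^ K = of_int q ^ k * of_int q ^ (K - k)"
    by (simp add: power_add [symmetric])
  then have "(of_int q :: rat) ^ K * (of_int p / of_int q) ^ k = of_int (p ^ k * q ^ (K - k))"
    using q by (simp add: power_divide)
  with add show ?case by (simp add: distrib_left)
qed simp

(* Multiplying by q^K turns both sums into the integers \<Sum> p^k q^(K-k), and each term is
   congruent to w k q^K modulo m; q^K is then cancelled. *)
lemma powsum_eq_imp_cong:
  fixes p q m :: int and w :: "nat \<Rightarrow> int"
  assumes q: "q \<noteq> 0" and cop: "coprime m q"
    and w: "\<And>k. [p ^ k = w k * q ^ k] (mod m)"
    and eq: "powsum (of_int p / of_int q) E1 = powsum (of_int p / of_int q) E2"
  shows "[(\<Sum>k\<in>#E1. w k) = (\<Sum>k\<in>#E2. w k)] (mod m)"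
proof -
  define K where "K = Max (insert 0 (set_mset (E1 + E2)))"
  have bounded: "\<forall>k\<in>#E1. k \<le> K" "\<forall>k\<in>#E2. k \<le> K"
    by (auto simp: K_def)
  have term_cong: "[p ^ k * q ^ (K - k) = w k * q ^ K] (mod m)" if "k \<le> K" for k
  proof -
    have "[p ^ k * q ^ (K - k) = w k * q ^ k * q ^ (K - k)] (mod m)"
      using w by (rule cong_scalar_right)
    also have "w k * q ^ k * q ^ (K - k) = w k * q ^ K"
      using that by (simp add: power_add [symmetric] mult.assoc)
    finally show ?thesis .
  qed
  have sum_cong: "[(\<Sum>k\<in>#E. p ^ k * q ^ (K - k)) = (\<Sum>k\<in>#E. w k) * q ^ K] (mod m)"
    if "\<forall>k\<in>#E. k \<le> K" for E
    using that by (induction E) (auto simp: distrib_right intro: cong_add term_cong)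
  have "(\<Sum>k\<in>#E1. p ^ k * q ^ (K - k)) = (\<Sum>k\<in>#E2. p ^ k * q ^ (K - k))"
    using powsum_clear_denominator [OF q bounded(1), of p] powsum_clear_denominator [OF q bounded(2), of p] eq
    by (metis of_int_eq_iff)
  then have "[(\<Sum>k\<in>#E1. w k) * q ^ K = (\<Sum>k\<in>#E2. w k) * q ^ K] (mod m)"
    using sum_cong [OF bounded(1)] sum_cong [OF bounded(2)] by (metis cong_sym cong_trans)
  moreover have "coprime (q ^ K) m"
    using cop by (simp add: coprime_commute)
  ultimately show ?thesis
    by (simp add: cong_mult_rcancel)
qed

lemma powsum_eq_imp_dvd_count_zero:
  fixes p q :: int
  assumes "q \<noteq> 0" and "coprime p q"
    and "powsum (of_int p / of_int q) E1 = powsum (of_int p / of_int q) E2"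
  shows "p dvd int (count E1 0) - int (count E2 0)"
proof -
  have "[p ^ k = (if k = 0 then 1 else 0) * q ^ k] (mod p)" for k
    by (cases k) (simp_all add: cong_0_iff)
  from powsum_eq_imp_cong [OF assms(1,2) this assms(3)] show ?thesis
    by (simp add: sum_mset_delta cong_iff_dvd_diff)
qed

lemma powsum_eq_imp_size_cong:
  fixes p q m :: int
  assumes "q \<noteq> 0" and "coprime m q" and "[p = q] (mod m)"
    and "powsum (of_int p / of_int q) E1 = powsum (of_int p / of_int q) E2"
  shows "[int (size E1) = int (size E2)] (mod m)"
proof -
  have "[p ^ k = 1 * q ^ k] (mod m)" for k
    using assms(3) by (simp add: cong_pow)
  from powsum_eq_imp_cong [OF assms(1,2) this assms(4)] show ?thesis
    by (simp add: sum_mset_constant)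
qed

lemma ex_less_power:
  fixes r y :: "'a::archimedean_field"
  assumes "1 < r"
  shows "\<exists>n. y < r ^ n"
proof -
  obtain n where "y < of_nat n * (r - 1)"
    using ex_less_of_nat_mult assms by (metis diff_gt_0_iff_gt)
  moreover have "1 + of_nat n * (r - 1) \<le> r ^ n"
    using Bernoulli_inequality [of "r - 1" n] assms by simp
  ultimately show ?thesis
    by (metis add_strict_increasing order_less_le_trans zero_less_one less_imp_le)
qed

lemma eventually_less_power:
  fixes r y :: "'a::archimedean_field"
  assumes "1 < r"
  shows "eventually (\<lambda>n. y < r ^ n) sequentially"
proof -
  obtain n where "y < r ^ n"
    using ex_less_power assms by blast
  then have "y < r ^ k" if "n \<le> k" for k
    using that assms by (meson order_less_le_trans power_increasing less_imp_le)
  then show ?thesis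
    by (auto simp: eventually_sequentially)
qed

lemma eventually_power_less:
  fixes r e :: "'a::archimedean_field"
  assumes "0 < r" "r < 1" "0 < e"
  shows "eventually (\<lambda>n. r ^ n < e) sequentially"
proof -
  have "eventually (\<lambda>n. inverse e < inverse r ^ n) sequentially"
    using assms by (intro eventually_less_power) (simp add: one_less_inverse)
  then show ?thesis
  proof (rule eventually_mono)
    fix n assume "inverse e < inverse r ^ n"
    then show "r ^ n < e"
      using assms by (simp add: power_inverse inverse_less_iff_less)
  qed
qed

lemma eventually_in_cofinite_set:
  fixes N :: "nat set"
  shows "finite (UNIV - N) \<Longrightarrow> eventually (\<lambda>M. M \<in> N) sequentially"
  by (simp add: cofinite_eq_sequentially [symmetric] eventually_cofinite Compl_eq_Diff_UNIV [symmetric] Collect_neg_eq)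

lemma sum_mset_pos:
  fixes F :: "'a::ordered_comm_monoid_add multiset"
  shows "set_mset F \<subseteq> {0<..} \<Longrightarrow> F \<noteq> {#} \<Longrightarrow> 0 < sum_mset F"
proof (induction F)
  case (add x F)
  show ?case
  proof (cases "F = {#}")
    case False
    with add have "0 < x" "0 < sum_mset F" by auto
    then show ?thesis by (simp add: add_pos_pos)
  qed (use add.prems in simp)
qed simp

lemma set_mset_subset_imageE:
  assumes "set_mset F \<subseteq> f ` A"
  obtains E where "set_mset E \<subseteq> A" and "F = image_mset f E"
proof -
  have "\<exists>E. set_mset E \<subseteq> A \<and> F = image_mset f E"
    using assms
  proof (induction F)
    case (add x F)
    then obtain E a where "set_mset E \<subseteq> A" "F = image_mset f E" "a \<in> A" "x = f a"
      by auto
    then show ?case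
      by (intro exI [of _ "add_mset a E"]) auto
  qed simp
  then show ?thesis
    using that by blast
qed

lemma sum_mset_in_gen_monoid: "set_mset F \<subseteq> G \<Longrightarrow> sum_mset F \<in> gen_monoid G"
  unfolding gen_monoid_def by blast

lemma units_of_gen_monoid:
  assumes "G \<subseteq> {0<..}"
  shows "units_of_monoid (gen_monoid G) = {0}"
proof -
  have "x \<ge> 0" if x: "x \<in> gen_monoid G" for x
  proof -
    obtain F where "set_mset F \<subseteq> G" "x = sum_mset F"
      using x unfolding gen_monoid_def by auto
    then show ?thesis
      using sum_mset_pos [of F] assms by (cases "F = {#}") (auto intro: less_imp_le)
  qed
  moreover have "0 \<in> gen_monoid G"
    unfolding gen_monoid_def by (auto intro!: exI [of _ "{#}"])
  ultimately show ?thesis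
    unfolding units_of_monoid_def by (auto simp: add_nonneg_eq_0_iff)
qed

lemma factorization_of_atom:
  assumes G: "G \<subseteq> {0<..}" and a: "a \<in> atoms (gen_monoid G)"
    and F: "set_mset F \<subseteq> G" "sum_mset F = a"
  shows "F = {#a#}"
proof -
  have a0: "a \<noteq> 0"
    and irreducible: "\<And>x y. x \<in> gen_monoid G \<Longrightarrow> y \<in> gen_monoid G \<Longrightarrow> a = x + y \<Longrightarrow> x = 0 \<or> y = 0"
    using a unfolding atoms_def units_of_gen_monoid [OF G] by auto
  obtain y where y: "y \<in># F"
    using a0 F(2) by (cases F) auto
  define R where "R = F - {#y#}"
  have F_eq: "F = add_mset y R" and R: "set_mset R \<subseteq> G"
    using y F(1) by (auto simp: R_def dest: in_diffD)
  have "y \<in> gen_monoid G" "sum_mset R \<in> gen_monoid G"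
    using sum_mset_in_gen_monoid [of "{#y#}" G] sum_mset_in_gen_monoid [OF R] y F(1) by auto
  moreover have "a = y + sum_mset R"
    using F(2) F_eq by simp
  moreover have "y \<noteq> 0"
    using y F(1) G by auto
  ultimately have "sum_mset R = 0"
    using irreducible by blast
  then have "R = {#}"
    using sum_mset_pos [of R] R G by force
  then show ?thesis
    using F(2) F_eq by simp
qed

lemma atoms_gen_monoid:
  assumes G: "G \<subseteq> {0<..}"
  shows "atoms (gen_monoid G) = {a \<in> G. \<forall>F. set_mset F \<subseteq> G \<and> sum_mset F = a \<longrightarrow> size F = 1}"
    (is "_ = ?A")
proof
  show "atoms (gen_monoid G) \<subseteq> ?A"
  proof
    fix a assume a: "a \<in> atoms (gen_monoid G)"
    then obtain F where "set_mset F \<subseteq> G" "sum_mset F = a"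
      unfolding atoms_def gen_monoid_def by auto
    then have "a \<in> G"
      using factorization_of_atom [OF G a] by (metis insert_subset set_mset_add_mset_insert)
    moreover have "size F' = 1" if "set_mset F' \<subseteq> G" "sum_mset F' = a" for F'
      using factorization_of_atom [OF G a that] by simp
    ultimately show "a \<in> ?A"
      by blast
  qed
  show "?A \<subseteq> atoms (gen_monoid G)"
  proof
    fix a assume a: "a \<in> ?A"
    have "x = 0 \<or> y = 0" if xy: "x \<in> gen_monoid G" "y \<in> gen_monoid G" and sum: "a = x + y" for x y
    proof -
      obtain F1 F2 where F: "set_mset F1 \<subseteq> G" "x = sum_mset F1" "set_mset F2 \<subseteq> G" "y = sum_mset F2"
        using xy unfolding gen_monoid_def by auto
      then have "set_mset (F1 + F2) \<subseteq> G" "sum_mset (F1 + F2) = a"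
        using sum by auto
      then have "size (F1 + F2) = 1"
        using a by blast
      then have "size F1 + size F2 = 1"
        by simp
      then have "F1 = {#} \<or> F2 = {#}"
        by (auto simp: add_is_1)
      then show ?thesis
        using F by auto
    qed
    moreover have "a \<in> gen_monoid G" "a \<noteq> 0"
      using a G sum_mset_in_gen_monoid [of "{#a#}" G] by auto
    ultimately show "a \<in> atoms (gen_monoid G)"
      unfolding atoms_def units_of_gen_monoid [OF G] by auto
  qed
qed

lemma sum_mset_powers: "sum_mset (image_mset (\<lambda>k. r ^ k) E) = powsum r E"
  by (simp add: powsum_def)

lemma exp_puiseux_eq: "exp_puiseux r N = {powsum r E | E. set_mset E \<subseteq> N}"
proof -
  have "{r ^ k | k. k \<in> N} = (\<lambda>k. r ^ k) ` N"
    by blast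
  then show ?thesis
    unfolding exp_puiseux_def gen_monoid_def
    by (force simp flip: sum_mset_powers elim!: set_mset_subset_imageE)
qed

definition unique_length :: "rat \<Rightarrow> nat multiset \<Rightarrow> bool" where
  "unique_length r X \<longleftrightarrow> (\<forall>E. powsum r E = powsum r X \<longrightarrow> size E = size X)"

lemma atoms_exp_puiseux:
  assumes "r > 0" and "\<And>k. unique_length r {#k#}"
  shows "atoms (exp_puiseux r N) = (\<lambda>k. r ^ k) ` N"
proof -
  have G: "{r ^ k | k. k \<in> N} = (\<lambda>k. r ^ k) ` N"
    by blast
  have "size F = 1" if F: "set_mset F \<subseteq> (\<lambda>k. r ^ k) ` N" and sum: "sum_mset F = r ^ k" for F k
  proof -
    obtain E where "set_mset E \<subseteq> N" "F = image_mset (\<lambda>k. r ^ k) E"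
      using F by (rule set_mset_subset_imageE)
    with sum assms(2) [of k] show ?thesis
      by (simp add: sum_mset_powers unique_length_def)
  qed
  moreover have "(\<lambda>k. r ^ k) ` N \<subseteq> {0<..}"
    using assms(1) by auto
  ultimately show ?thesis
    unfolding exp_puiseux_def G by (subst atoms_gen_monoid) auto
qed

lemma lengths_exp_puiseux:
  assumes "atoms (exp_puiseux r N) = (\<lambda>k. r ^ k) ` N"
  shows "lengths (exp_puiseux r N) x = {size E | E. set_mset E \<subseteq> N \<and> powsum r E = x}"
proof (intro equalityI subsetI)
  fix l assume "l \<in> lengths (exp_puiseux r N) x"
  then obtain F where F: "l = size F" "set_mset F \<subseteq> (\<lambda>k. r ^ k) ` N" "sum_mset F = x"
    unfolding lengths_def assms by blast
  then obtain E where "set_mset E \<subseteq> N" "F = image_mset (\<lambda>k. r ^ k) E"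
    by (blast elim: set_mset_subset_imageE)
  with F show "l \<in> {size E | E. set_mset E \<subseteq> N \<and> powsum r E = x}"
    by (auto simp: sum_mset_powers)
next
  fix l assume "l \<in> {size E | E. set_mset E \<subseteq> N \<and> powsum r E = x}"
  then obtain E where "l = size E" "set_mset E \<subseteq> N" "powsum r E = x"
    by blast
  then show "l \<in> lengths (exp_puiseux r N) x"
    unfolding lengths_def assms
    by (intro CollectI exI [of _ "image_mset (\<lambda>k. r ^ k) E"]) (auto simp: sum_mset_powers)
qed

lemma unique_length_empty: "r > 0 \<Longrightarrow> unique_length r {#}"
  by (simp add: unique_length_def powsum_eq_0_iff)

lemma unique_length_add_mset:
  assumes "unique_length r X"
    and "\<And>E. powsum r E = powsum r (add_mset M X) \<Longrightarrow> M \<in># E"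
  shows "unique_length r (add_mset M X)"
  unfolding unique_length_def
proof (intro allI impI)
  fix E assume eq: "powsum r E = powsum r (add_mset M X)"
  then have E: "add_mset M (E - {#M#}) = E"
    using assms(2) by (simp only: insert_DiffM)
  have "powsum r (add_mset M (E - {#M#})) = powsum r (add_mset M X)"
    unfolding E by (fact eq)
  then have "powsum r (E - {#M#}) = powsum r X"
    by simp
  then have "size (E - {#M#}) = size X"
    using assms(1) unfolding unique_length_def by blast
  moreover have "size E = size (add_mset M (E - {#M#}))"
    by (simp only: E)
  ultimately show "size E = size (add_mset M X)"
    by simp
qed

(* Reflecting the exponents about M gives equal sums of powers of inverse r = b/a in which the
   exponent 0 occurs once on the right and not at all on the left, so b would divide 1. *)
lemma largest_exponent_forced:
  fixes a b :: int
  assumes r: "r = of_int a / of_int b" and b: "b \<ge> 2" and cop: "coprime a b" and r1: "r > 1"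
    and X: "\<forall>k\<in>#X. k < M" and small: "powsum r X < r ^ M * (r - 1)"
    and eq: "powsum r E = powsum r (add_mset M X)"
  shows "M \<in># E"
proof (rule ccontr)
  assume M: "M \<notin># E"
  have below: "k < M" if k: "k \<in># E" for k
  proof -
    have "r ^ k \<le> r ^ M + powsum r X"
      using power_le_powsum [of r k E] k r1 eq by simp
    also have "\<dots> < r ^ Suc M"
      using small by (simp add: algebra_simps)
    finally have "k < Suc M"
      using r1 by (subst (asm) power_strict_increasing_iff)
    with M k show ?thesis
      by (cases "k = M") auto
  qed
  then have bounded: "\<forall>k\<in>#E. k \<le> M" "\<forall>k\<in>#add_mset M X. k \<le> M"
    using below X by (auto intro: less_imp_le)
  let ?reflect = "image_mset (\<lambda>k. M - k)"
  have "inverse r = of_int b / of_int a"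
    using r by simp
  moreover have "powsum (inverse r) (?reflect E) = powsum (inverse r) (?reflect (add_mset M X))"
    using eq r1 powsum_reflect [OF _ bounded(1)] powsum_reflect [OF _ bounded(2)] by simp
  ultimately have "b dvd int (count (?reflect E) 0) - int (count (?reflect (add_mset M X)) 0)"
    using cop b by (intro powsum_eq_imp_dvd_count_zero) (auto simp: coprime_commute)
  moreover have "0 \<notin># ?reflect E" "0 \<notin># ?reflect X"
    using below X by (auto dest: below leD)
  then have "count (?reflect E) 0 = 0" "count (?reflect X) 0 = 0"
    by (simp_all only: not_in_iff)
  ultimately show False
    using b by (auto dest: zdvd_imp_le)
qed

lemma smallest_exponent_forced:
  fixes a b :: int
  assumes r: "r = of_int a / of_int b" and a: "a \<ge> 2" and b: "b > 0" and cop: "coprime a b"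
    and r1: "r < 1"
    and X: "\<forall>k\<in>#X. M < k" and small: "powsum r X * r < r ^ M * (1 - r)"
    and eq: "powsum r E = powsum r (add_mset M X)"
  shows "M \<in># E"
proof (rule ccontr)
  assume M: "M \<notin># E"
  have r0: "r > 0"
    using r a b by simp
  have above: "M < k" if k: "k \<in># E" for k
  proof (rule ccontr)
    assume "\<not> M < k"
    with M k have "Suc k \<le> M"
      by (cases "k = M") auto
    then have "r ^ M \<le> r ^ k * r"
      using r0 r1 power_decreasing [of "Suc k" M r] by (simp add: mult.commute)
    also have "\<dots> \<le> (r ^ M + powsum r X) * r"
      using power_le_powsum [of r k E] k r0 eq by simp
    also have "\<dots> < r ^ M"
      using small by (simp add: algebra_simps)
    finally show False
      by simp
  qed
  then have bounded: "\<forall>k\<in>#E. M \<le> k" "\<forall>k\<in>#add_mset M X. M \<le> k"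
    using X by (auto intro: less_imp_le)
  let ?shift = "image_mset (\<lambda>k. k - M)"
  have "powsum r (?shift E) = powsum r (?shift (add_mset M X))"
    using eq r0 powsum_shift [OF bounded(1)] powsum_shift [OF bounded(2)] by simp
  then have "a dvd int (count (?shift E) 0) - int (count (?shift (add_mset M X)) 0)"
    using r cop b by (intro powsum_eq_imp_dvd_count_zero) auto
  moreover have "0 \<notin># ?shift E" "0 \<notin># ?shift X"
    using above X by (auto dest: above leD)
  then have "count (?shift E) 0 = 0" "count (?shift X) 0 = 0"
    by (simp_all only: not_in_iff)
  ultimately show False
    using a by (auto dest: zdvd_imp_le)
qed

lemma coprime_ratio_ne_1:
  fixes a b :: int
  assumes "a \<ge> 2" "b > 0" "coprime a b"
  shows "of_int a / of_int b \<noteq> (1::rat)"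
proof
  assume "of_int a / of_int b = (1::rat)"
  then have "a = b"
    using assms(2) by simp
  with assms show False
    by auto
qed

lemma unique_length_singleton:
  fixes a b :: int
  assumes r: "r = of_int a / of_int b" and a: "a \<ge> 2" and b: "b \<ge> 2" and cop: "coprime a b"
  shows "unique_length r {#k#}"
proof -
  have r0: "r > 0"
    using r a b by simp
  have "r \<noteq> 1"
    using r a b cop coprime_ratio_ne_1 by auto
  then consider "r > 1" | "r < 1"
    by linarith
  then have "k \<in># E" if "powsum r E = powsum r {#k#}" for E
  proof cases
    case 1
    with r b cop that show ?thesis
      by (intro largest_exponent_forced [where X = "{#}"]) auto
  next
    case 2
    with r a b cop r0 that show ?thesis
      by (intro smallest_exponent_forced [where X = "{#}"]) auto
  qed
  then show ?thesis
    using unique_length_add_mset [OF unique_length_empty [OF r0]] by blast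
qed

lemma exists_unique_length_gt_1:
  fixes a b :: int
  assumes r: "r = of_int a / of_int b" and b: "b \<ge> 2" and cop: "coprime a b" and r1: "r > 1"
    and N: "finite (UNIV - N)"
  shows "\<exists>X. set_mset X \<subseteq> N \<and> size X = n \<and> unique_length r X"
proof (induction n)
  case 0
  then show ?case
    using unique_length_empty r1 by (intro exI [of _ "{#}"]) auto
next
  case (Suc n)
  then obtain X where X: "set_mset X \<subseteq> N" "size X = n" "unique_length r X"
    by blast
  have "eventually (\<lambda>M. M \<in> N \<and> (\<forall>k\<in>#X. k < M) \<and> powsum r X < r ^ M * (r - 1)) sequentially"
  proof (intro eventually_conj)
    show "eventually (\<lambda>M. M \<in> N) sequentially"
      using N by (rule eventually_in_cofinite_set)
    show "eventually (\<lambda>M. \<forall>k\<in>#X. k < M) sequentially"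
      by (intro eventually_ball_finite) auto
    show "eventually (\<lambda>M. powsum r X < r ^ M * (r - 1)) sequentially"
      using eventually_less_power [OF r1, of "powsum r X / (r - 1)"]
      by (rule eventually_mono) (use r1 in \<open>simp add: divide_less_eq\<close>)
  qed
  then obtain M where M: "M \<in> N" "\<forall>k\<in>#X. k < M" "powsum r X < r ^ M * (r - 1)"
    by (auto simp: eventually_sequentially)
  have "unique_length r (add_mset M X)"
    using X(3) largest_exponent_forced [OF r b cop r1 M(2,3)] by (rule unique_length_add_mset)
  with X M(1) show ?case
    by (intro exI [of _ "add_mset M X"]) auto
qed

lemma exists_unique_length_lt_1:
  fixes a b :: int
  assumes r: "r = of_int a / of_int b" and a: "a \<ge> 2" and b: "b > 0" and cop: "coprime a b"
    and r1: "r < 1" and N: "finite (UNIV - N)"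
  shows "\<exists>X. set_mset X \<subseteq> N \<and> size X = n \<and> (\<forall>k\<in>#X. L < k) \<and> unique_length r X"
proof -
  have r0: "r > 0"
    using r a b by simp
  show ?thesis
  proof (induction n arbitrary: L)
    case 0
    show ?case
      using unique_length_empty [OF r0] by (intro exI [of _ "{#}"]) auto
  next
    case (Suc n)
    obtain M where M: "M \<in> N" "L < M"
      using eventually_conj [OF eventually_in_cofinite_set [OF N] eventually_gt_at_top [of L]]
      by (auto simp: eventually_sequentially)
    define c where "c = r ^ M * (1 - r)"
    have "c > 0"
      using r0 r1 by (simp add: c_def)
    then have "eventually (\<lambda>L'. M < L' \<and> r ^ L' < c / (of_nat n + 1)) sequentially"
      using r0 r1 by (intro eventually_conj eventually_gt_at_top eventually_power_less) auto
    then obtain L' where L': "M < L'" "r ^ L' < c / (of_nat n + 1)"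
      by (auto simp: eventually_sequentially)
    obtain X where X: "set_mset X \<subseteq> N" "size X = n" "\<forall>k\<in>#X. L' < k" "unique_length r X"
      using Suc by blast
    have "r ^ k \<le> r ^ L'" if "k \<in># X" for k
      using X(3) that r0 r1 by (intro power_decreasing) (auto intro: less_imp_le)
    then have "powsum r X \<le> of_nat n * r ^ L'"
      using powsum_le_size X(2) by blast
    also have "\<dots> < (of_nat n + 1) * r ^ L'"
      using r0 by (simp add: distrib_right)
    also have "\<dots> < c"
      using L'(2) by (simp add: field_simps add_pos_nonneg)
    finally have "powsum r X < c" .
    moreover have "powsum r X * r \<le> powsum r X"
      using powsum_nonneg [OF r0, of X] r1 by (simp add: mult_left_le)
    ultimately have small: "powsum r X * r < r ^ M * (1 - r)"
      unfolding c_def by linarith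
    have above: "\<forall>k\<in>#X. M < k"
      using X(3) L'(1) by auto
    have "unique_length r (add_mset M X)"
      using X(4) smallest_exponent_forced [OF r a b cop r1 above small] by (rule unique_length_add_mset)
    with X M L'(1) show ?case
      by (intro exI [of _ "add_mset M X"]) auto
  qed
qed

lemma exists_unique_length:
  fixes a b :: int
  assumes r: "r = of_int a / of_int b" and a: "a \<ge> 2" and b: "b \<ge> 2" and cop: "coprime a b"
    and N: "finite (UNIV - N)"
  shows "\<exists>X. set_mset X \<subseteq> N \<and> size X = n \<and> unique_length r X"
proof -
  have "r \<noteq> 1"
    using r a b cop coprime_ratio_ne_1 by auto
  then consider "r > 1" | "r < 1"
    by linarith
  then show ?thesis
  proof cases
    case 1
    with exists_unique_length_gt_1 [OF r b cop _ N] show ?thesis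
      by blast
  next
    case 2
    have "b > 0"
      using b by simp
    from exists_unique_length_lt_1 [OF r a this cop 2 N] show ?thesis
      by blast
  qed
qed

lemma nontrivial_ratE:
  assumes "r > 0" and "r \<notin> \<nat>" and "rat_num r > 1"
  obtains a b :: int where "r = of_int a / of_int b" "a \<ge> 2" "b \<ge> 2" "coprime a b"
proof -
  obtain a b where q: "quotient_of r = (a, b)"
    by (cases "quotient_of r")
  have "b \<noteq> 1"
  proof
    assume "b = 1"
    then have "r = of_nat (nat a)"
      using quotient_of_div [OF q] assms(3) q by (simp add: rat_num_def)
    with assms(2) show False
      by simp
  qed
  with quotient_of_denom_pos [OF q] have "b \<ge> 2"
    by simp
  with that quotient_of_div [OF q] quotient_of_coprime [OF q] assms(3) q show ?thesis
    by (simp add: rat_num_def)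
qed

lemma singleton_in_system_of_lengths:
  assumes N: "numerical_monoid N" and r: "r > 0" "r \<notin> \<nat>" "rat_num r > 1"
  shows "{n} \<in> system_of_lengths (exp_puiseux r N)"
proof -
  obtain a b where ab: "r = of_int a / of_int b" "a \<ge> 2" "b \<ge> 2" "coprime a b"
    using r by (rule nontrivial_ratE)
  have atoms: "atoms (exp_puiseux r N) = (\<lambda>k. r ^ k) ` N"
    using r(1) unique_length_singleton [OF ab] by (rule atoms_exp_puiseux)
  have "finite (UNIV - N)"
    using N by (simp add: numerical_monoid_def)
  then obtain X where X: "set_mset X \<subseteq> N" "size X = n" "unique_length r X"
    using exists_unique_length [OF ab] by blast
  have "size E = n" if "powsum r E = powsum r X" for E
    using X(2,3) that unfolding unique_length_def by blast
  with X(1,2) have "lengths (exp_puiseux r N) (powsum r X) = {n}"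
    unfolding lengths_exp_puiseux [OF atoms] by blast
  moreover have "powsum r X \<in> exp_puiseux r N"
    using X(1) by (auto simp: exp_puiseux_eq)
  ultimately show ?thesis
    unfolding system_of_lengths_def by blast
qed

lemma lengths_exp_puiseux_cong:
  fixes p q m :: int
  assumes atoms: "atoms (exp_puiseux r N) = (\<lambda>k. r ^ k) ` N"
    and r: "r = of_int p / of_int q" and q: "q \<noteq> 0" and cop: "coprime m q" and pq: "[p = q] (mod m)"
    and l: "l1 \<in> lengths (exp_puiseux r N) x" "l2 \<in> lengths (exp_puiseux r N) x"
  shows "[int l1 = int l2] (mod m)"
proof -
  obtain E1 E2 where "l1 = size E1" "l2 = size E2" "powsum r E1 = powsum r E2"
    using l unfolding lengths_exp_puiseux [OF atoms] by auto
  with powsum_eq_imp_size_cong [OF q cop pq] r show ?thesis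
    by simp
qed

lemma lengths_exp_puiseux_nonempty:
  assumes "atoms (exp_puiseux r N) = (\<lambda>k. r ^ k) ` N" and "x \<in> exp_puiseux r N"
  shows "lengths (exp_puiseux r N) x \<noteq> {}"
proof -
  obtain E where "set_mset E \<subseteq> N" "x = powsum r E"
    using assms(2) by (auto simp: exp_puiseux_eq)
  then show ?thesis
    by (auto simp: lengths_exp_puiseux [OF assms(1)])
qed

lemma quotient_of_odd_over_succ:
  fixes m :: int
  assumes "m \<ge> 1"
  shows "quotient_of (of_int (2 * m + 1) / of_int (m + 1)) = (2 * m + 1, m + 1)"
proof -
  have "coprime (2 * m + 1) (m + 1)"
  proof (rule coprimeI)
    fix c assume "c dvd 2 * m + 1" "c dvd m + 1"
    then have "c dvd 2 * (m + 1) - (2 * m + 1)"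
      by (intro dvd_diff dvd_mult)
    then show "c dvd 1"
      by simp
  qed
  moreover have "of_int (2 * m + 1) / of_int (m + 1) = Fract (2 * m + 1) (m + 1)"
    by (simp add: Fract_of_int_quotient)
  ultimately show ?thesis
    using assms by (simp add: quotient_of_Fract)
qed

lemma odd_over_succ_nontrivial:
  fixes m :: int
  assumes m: "m \<ge> 1"
  defines "r \<equiv> of_int (2 * m + 1) / of_int (m + 1) :: rat"
  shows "r > 0" and "r \<notin> \<nat>" and "rat_num r > 1"
proof -
  have q: "quotient_of r = (2 * m + 1, m + 1)"
    unfolding r_def using m by (rule quotient_of_odd_over_succ)
  show "r > 0"
    using m by (simp add: r_def)
  show "rat_num r > 1"
    using q m by (simp add: rat_num_def)
  show "r \<notin> \<nat>"
  proof
    assume "r \<in> \<nat>"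
    then obtain k where "r = of_nat k"
      by (auto elim: Nats_cases)
    then have "quotient_of r = (int k, 1)"
      by simp
    with q m show False
      by simp
  qed
qed

lemma odd_over_succ_lengths_cong:
  fixes m :: int
  assumes m: "m \<ge> 1"
    and L: "L \<in> system_of_lengths (exp_puiseux (of_int (2 * m + 1) / of_int (m + 1)) N)"
  shows "L \<noteq> {}" and "\<forall>l1\<in>L. \<forall>l2\<in>L. [int l1 = int l2] (mod m)"
proof -
  define r :: rat where "r = of_int (2 * m + 1) / of_int (m + 1)"
  have cop: "coprime (2 * m + 1) (m + 1)"
    using quotient_of_coprime [OF quotient_of_odd_over_succ [OF m]] .
  have atoms: "atoms (exp_puiseux r N) = (\<lambda>k. r ^ k) ` N"
    using odd_over_succ_nontrivial(1) [OF m] unique_length_singleton [OF r_def _ _ cop] m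
    unfolding r_def by (intro atoms_exp_puiseux) auto
  obtain x where x: "x \<in> exp_puiseux r N" "L = lengths (exp_puiseux r N) x"
    using L unfolding system_of_lengths_def r_def by blast
  show "L \<noteq> {}"
    using lengths_exp_puiseux_nonempty [OF atoms x(1)] x(2) by simp
  have "[2 * m + 1 = m + 1] (mod m)"
    by (simp add: cong_iff_dvd_diff)
  moreover have "coprime m (m + 1)"
    by simp
  ultimately show "\<forall>l1\<in>L. \<forall>l2\<in>L. [int l1 = int l2] (mod m)"
    using lengths_exp_puiseux_cong [OF atoms r_def] m x(2) by auto
qed

lemma eq_if_cong_all_moduli:
  fixes l1 l2 :: nat
  assumes "\<And>m. m \<ge> 1 \<Longrightarrow> [int l1 = int l2] (mod m)"
  shows "l1 = l2"
proof -
  have "[int l1 = int l2] (mod int (l1 + l2 + 1))"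
    using assms by simp
  then have "int l1 = int l2"
    using cong_less_imp_eq_int [of "int l1" "int (l1 + l2 + 1)" "int l2"] by simp
  then show ?thesis
    by simp
qed

theorem mainTheorem5:
  shows "\<Inter> {system_of_lengths (exp_puiseux r N) | r N.
             numerical_monoid N \<and> r > 0 \<and> r \<notin> \<nat> \<and> rat_num r > 1}
         = {{n} | n :: nat. True}"
proof (intro equalityI subsetI)
  fix L assume L: "L \<in> \<Inter> {system_of_lengths (exp_puiseux r N) | r N.
             numerical_monoid N \<and> r > 0 \<and> r \<notin> \<nat> \<and> rat_num r > 1}"
  have "numerical_monoid UNIV"
    by (simp add: numerical_monoid_def)
  then have system: "L \<in> system_of_lengths (exp_puiseux (of_int (2 * m + 1) / of_int (m + 1)) UNIV)"
    if "m \<ge> 1" for m :: int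
    using L odd_over_succ_nontrivial [OF that] by blast
  obtain n where n: "n \<in> L"
    using odd_over_succ_lengths_cong(1) [OF _ system, of 1] by auto
  have "l = n" if "l \<in> L" for l
    using odd_over_succ_lengths_cong(2) [OF _ system] that n by (blast intro: eq_if_cong_all_moduli)
  with n show "L \<in> {{n} | n :: nat. True}"
    by blast
next
  fix L assume "L \<in> {{n} | n :: nat. True}"
  then show "L \<in> \<Inter> {system_of_lengths (exp_puiseux r N) | r N.
             numerical_monoid N \<and> r > 0 \<and> r \<notin> \<nat> \<and> rat_num r > 1}"
    using singleton_in_system_of_lengths by blast
qed

end
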